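(* Let $G$ be a finite group, $b$ a block of $kG$ with defect group $P$, and let $i$ be an almost source idempotent in $(kGb)^{\Delta P}$. Denote by $\mathcal{F}$ the fusion system on $P$ determined by $i$. Let $Q$, $R$ be subgroups of $P$ and denote by $e$ the unique block of $kC_G(Q)$ satisfying $\mathrm{Br}_{\Delta Q}(i)e\neq 0$. Let $\varphi:Q\to R$ be an injective group homomorphism such that ${}_\varphi kR$ is isomorphic to a direct summand of $e\,kG\,i$ as a $kQ$-$kR$-bimodule. Then $\varphi\in\mathrm{Hom}_{\mathcal{F}}(Q,R)$.
   Context: $k$ is a field of prime characteristic $p$, assumed to be a splitting field for all block algebras that arise. A block of $kG$ is a primitive idempotent $b$ of $Z(kG)$; a defect group is a maximal $p$-subgroup $P$ with $kP$ a direct summand of $kGb$ as $kP$-$kP$-bimodule. $\Delta Q=\{(u,u)\mid u\in Q\}$, and $\mathrm{Br}_{\Delta Q}:(kG)^{\Delta Q}\to kC_G(Q)$ is the Brauer homomorphism, the linear map induced by sending $x\in C_G(Q)$ to $x$ and $x\in G\setminus C_G(Q)$ to $0$. An idempotent $i\in(kGb)^{\Delta P}$ is an almost source idempotent if $\mathrm{Br}_{\Delta P}(i)\ne0$ and for each $Q\le P$ there is a unique block $e_Q$ of $kC_G(Q)$ with $\mathrm{Br}_{\Delta Q}(i)\in kC_G(Q)e_Q$. The fusion system $\mathcal{F}$ determined by $i$: for $Q,R\le P$, $\mathrm{Hom}_{\mathcal{F}}(Q,R)$ is the set of group homomorphisms $\varphi:Q\to R$ for which there is $x\in G$ with $\varphi(u)=xux^{-1}$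 for all $u\in Q$ and $xe_Qx^{-1}=e_{xQx^{-1}}$. ${}_\varphi kR$ denotes the $kQ$-$kR$-bimodule $kR$ with $Q$ acting on the left through $\varphi$. *)

theory Defs
  imports "HOL-Algebra.Algebra"
begin

text \<open>Elements of kG are functions from the group to k; the element supported on a subset H
  (a subgroup) form kH. Multiplication is convolution.\<close>

definition galg :: "('g,'b) monoid_scheme \<Rightarrow> 'g set \<Rightarrow> ('g \<Rightarrow> 'k::field) set" where
  "galg G H = {a. \<forall>x. x \<notin> H \<longrightarrow> a x = 0}"

definition conv :: "('g,'b) monoid_scheme \<Rightarrow> ('g \<Rightarrow> 'k::field) \<Rightarrow> ('g \<Rightarrow> 'k) \<Rightarrow> ('g \<Rightarrow> 'k)" where
  "conv G a c = (\<lambda>x. if x \<in> carrier G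
      then (\<Sum>y\<in>carrier G. a y * c (inv\<^bsub>G\<^esub> y \<otimes>\<^bsub>G\<^esub> x)) else 0)"

definition delta :: "'g \<Rightarrow> ('g \<Rightarrow> 'k::field)" where
  "delta g = (\<lambda>x. if x = g then 1 else 0)"

definition gadd :: "('g \<Rightarrow> 'k::field) \<Rightarrow> ('g \<Rightarrow> 'k) \<Rightarrow> ('g \<Rightarrow> 'k)" where
  "gadd a c = (\<lambda>x. a x + c x)"

definition gsmult :: "'k::field \<Rightarrow> ('g \<Rightarrow> 'k) \<Rightarrow> ('g \<Rightarrow> 'k)" where
  "gsmult t a = (\<lambda>x. t * a x)"

definition gzero :: "'g \<Rightarrow> 'k::field" where
  "gzero = (\<lambda>x. 0)"

definition gcenter :: "('g,'b) monoid_scheme \<Rightarrow> 'g set \<Rightarrow> ('g \<Rightarrow> 'k::field) set" where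
  "gcenter G H = {z \<in> galg G H. \<forall>a \<in> galg G H. conv G z a = conv G a z}"

definition is_block :: "('g,'b) monoid_scheme \<Rightarrow> 'g set \<Rightarrow> ('g \<Rightarrow> 'k::field) \<Rightarrow> bool" where
  "is_block G H b \<longleftrightarrow> b \<in> gcenter G H \<and> conv G b b = b \<and> b \<noteq> gzero \<and>
     (\<forall>c \<in> gcenter G H. conv G c c = c \<and> conv G c b = c \<longrightarrow> c = gzero \<or> c = b)"

definition centr :: "('g,'b) monoid_scheme \<Rightarrow> 'g set \<Rightarrow> 'g set" where
  "centr G Q = {x \<in> carrier G. \<forall>u \<in> Q. x \<otimes>\<^bsub>G\<^esub> u = u \<otimes>\<^bsub>G\<^esub> x}"

definition gconj :: "('g,'b) monoid_scheme \<Rightarrow> 'g \<Rightarrow> ('g \<Rightarrow> 'k::field) \<Rightarrow> ('g \<Rightarrow> 'k)" where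
  "gconj G x a = conv G (delta x) (conv G a (delta (inv\<^bsub>G\<^esub> x)))"

definition fixed_pts :: "('g,'b) monoid_scheme \<Rightarrow> 'g set \<Rightarrow> ('g \<Rightarrow> 'k::field) set" where
  "fixed_pts G Q = {a \<in> galg G (carrier G). \<forall>u \<in> Q. gconj G u a = a}"

text \<open>Brauer homomorphism Br_{\<Delta>Q} (the linear map: keep coefficients on C_G(Q), kill the rest).\<close>
definition brauer :: "('g,'b) monoid_scheme \<Rightarrow> 'g set \<Rightarrow> ('g \<Rightarrow> 'k::field) \<Rightarrow> ('g \<Rightarrow> 'k)" where
  "brauer G Q a = (\<lambda>x. if x \<in> centr G Q then a x else 0)"

definition p_subgroup :: "('g,'b) monoid_scheme \<Rightarrow> nat \<Rightarrow> 'g set \<Rightarrow> bool" where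
  "p_subgroup G p P \<longleftrightarrow> subgroup P G \<and> (\<exists>n. card P = p ^ n)"

text \<open>bimod_summand G Q R \<alpha> M \<beta> N: M and N are k-subspaces of kG, regarded as kQ-kR-bimodules with
  u \<in> Q acting on the left by multiplication with delta (\<alpha> u) on M (resp. delta (\<beta> u) on N) and
  v \<in> R acting on the right by multiplication with delta v. The predicate says that M is isomorphic
  to a direct summand of N as kQ-kR-bimodule, i.e. there are bimodule homomorphisms f : M \<rightarrow> N and
  g : N \<rightarrow> M with g \<circ> f = id on M.\<close>

definition bimod_hom :: "('g,'b) monoid_scheme \<Rightarrow> 'g set \<Rightarrow> 'g set \<Rightarrow>
    ('g \<Rightarrow> 'g) \<Rightarrow> ('g \<Rightarrow> 'k::field) set \<Rightarrow> ('g \<Rightarrow> 'g) \<Rightarrow> ('g \<Rightarrow> 'k) set \<Rightarrow>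
    (('g \<Rightarrow> 'k) \<Rightarrow> ('g \<Rightarrow> 'k)) \<Rightarrow> bool" where
  "bimod_hom G Q R \<alpha> M \<beta> N f \<longleftrightarrow>
     (\<forall>m \<in> M. f m \<in> N) \<and>
     (\<forall>m \<in> M. \<forall>m' \<in> M. f (gadd m m') = gadd (f m) (f m')) \<and>
     (\<forall>t. \<forall>m \<in> M. f (gsmult t m) = gsmult t (f m)) \<and>
     (\<forall>u \<in> Q. \<forall>m \<in> M. f (conv G (delta (\<alpha> u)) m) = conv G (delta (\<beta> u)) (f m)) \<and>
     (\<forall>v \<in> R. \<forall>m \<in> M. f (conv G m (delta v)) = conv G (f m) (delta v))"

definition bimod_summand :: "('g,'b) monoid_scheme \<Rightarrow> 'g set \<Rightarrow> 'g set \<Rightarrow>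
    ('g \<Rightarrow> 'g) \<Rightarrow> ('g \<Rightarrow> 'k::field) set \<Rightarrow> ('g \<Rightarrow> 'g) \<Rightarrow> ('g \<Rightarrow> 'k) set \<Rightarrow> bool" where
  "bimod_summand G Q R \<alpha> M \<beta> N \<longleftrightarrow>
     (\<exists>f g. bimod_hom G Q R \<alpha> M \<beta> N f \<and> bimod_hom G Q R \<beta> N \<alpha> M g \<and> (\<forall>m \<in> M. g (f m) = m))"

definition block_alg :: "('g,'b) monoid_scheme \<Rightarrow> ('g \<Rightarrow> 'k::field) \<Rightarrow> ('g \<Rightarrow> 'k) set" where
  "block_alg G b = {conv G a b | a. a \<in> galg G (carrier G)}"

definition has_kP_summand :: "('g,'b) monoid_scheme \<Rightarrow> ('g \<Rightarrow> 'k::field) \<Rightarrow> 'g set \<Rightarrow> bool" where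
  "has_kP_summand G b P \<longleftrightarrow>
     bimod_summand G P P id (galg G P :: ('g \<Rightarrow> 'k) set) id (block_alg G b)"

definition defect_group :: "('g,'b) monoid_scheme \<Rightarrow> nat \<Rightarrow> ('g \<Rightarrow> 'k::field) \<Rightarrow> 'g set \<Rightarrow> bool" where
  "defect_group G p b P \<longleftrightarrow> p_subgroup G p P \<and> has_kP_summand G b P \<and>
     (\<forall>P'. p_subgroup G p P' \<and> has_kP_summand G b P' \<and> P \<subseteq> P' \<longrightarrow> P' = P)"

definition almost_source :: "('g,'b) monoid_scheme \<Rightarrow> ('g \<Rightarrow> 'k::field) \<Rightarrow> 'g set \<Rightarrow> ('g \<Rightarrow> 'k) \<Rightarrow> bool" where
  "almost_source G b P i \<longleftrightarrow>
     i \<in> block_alg G b \<and> i \<in> fixed_pts G P \<and> conv G i i = i \<and> brauer G P i \<noteq> gzero \<and>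
     (\<forall>Q. subgroup Q G \<and> Q \<subseteq> P \<longrightarrow>
        (\<exists>!e. is_block G (centr G Q) e \<and> brauer G Q i \<in> {conv G a e | a. a \<in> galg G (centr G Q)}))"

definition eQ :: "('g,'b) monoid_scheme \<Rightarrow> ('g \<Rightarrow> 'k::field) \<Rightarrow> 'g set \<Rightarrow> ('g \<Rightarrow> 'k)" where
  "eQ G i Q = (THE e. is_block G (centr G Q) e \<and>
                 brauer G Q i \<in> {conv G a e | a. a \<in> galg G (centr G Q)})"

definition fusion_hom :: "('g,'b) monoid_scheme \<Rightarrow> ('g \<Rightarrow> 'k::field) \<Rightarrow> 'g set \<Rightarrow> 'g set \<Rightarrow> ('g \<Rightarrow> 'g) \<Rightarrow> bool" where
  "fusion_hom G i Q R \<phi> \<longleftrightarrow>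
     (\<forall>u \<in> Q. \<phi> u \<in> R) \<and> (\<forall>u \<in> Q. \<forall>v \<in> Q. \<phi> (u \<otimes>\<^bsub>G\<^esub> v) = \<phi> u \<otimes>\<^bsub>G\<^esub> \<phi> v) \<and>
     (\<exists>x \<in> carrier G. (\<forall>u \<in> Q. \<phi> u = x \<otimes>\<^bsub>G\<^esub> u \<otimes>\<^bsub>G\<^esub> inv\<^bsub>G\<^esub> x) \<and>
        gconj G x (eQ G i Q) = eQ G i ((\<lambda>u. x \<otimes>\<^bsub>G\<^esub> u \<otimes>\<^bsub>G\<^esub> inv\<^bsub>G\<^esub> x) ` Q))"

text \<open>k is a splitting field for kH: End_{kH}(S) = k for every simple kH-module S.  Every simple
  module is kH/L for a maximal left ideal L, and End_{kH}(kH/L) is given by right multiplications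
  by elements a with L a \<subseteq> L, modulo L.\<close>

definition left_ideal :: "('g,'b) monoid_scheme \<Rightarrow> 'g set \<Rightarrow> ('g \<Rightarrow> 'k::field) set \<Rightarrow> bool" where
  "left_ideal G H L \<longleftrightarrow> L \<subseteq> galg G H \<and> gzero \<in> L \<and>
     (\<forall>l \<in> L. \<forall>l' \<in> L. gadd l l' \<in> L) \<and> (\<forall>t. \<forall>l \<in> L. gsmult t l \<in> L) \<and>
     (\<forall>a \<in> galg G H. \<forall>l \<in> L. conv G a l \<in> L)"

definition max_left_ideal :: "('g,'b) monoid_scheme \<Rightarrow> 'g set \<Rightarrow> ('g \<Rightarrow> 'k::field) set \<Rightarrow> bool" where
  "max_left_ideal G H L \<longleftrightarrow> left_ideal G H L \<and> L \<noteq> galg G H \<and>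
     (\<forall>L'. left_ideal G H L' \<and> L \<subseteq> L' \<longrightarrow> L' = L \<or> L' = galg G H)"

definition splitting_field_for :: "('g,'b) monoid_scheme \<Rightarrow> 'g set \<Rightarrow> 'k::field itself \<Rightarrow> bool" where
  "splitting_field_for G H (TYPE('k)) \<longleftrightarrow>
     (\<forall>L :: ('g \<Rightarrow> 'k) set. max_left_ideal G H L \<longrightarrow>
        (\<forall>a \<in> galg G H. (\<forall>l \<in> L. conv G l a \<in> L) \<longrightarrow>
           (\<exists>t. gadd a (gsmult (- t) (delta \<one>\<^bsub>G\<^esub>)) \<in> L)))"

end

(*
  Let f : kR \<rightarrow> e kG i and g : e kG i \<rightarrow> kR be bimodule maps with g \<circ> f = id, and put
  c = f(1).  Then u c = c \<phi>(u) for u \<in> Q, so the coefficients of c are constant on the orbits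
  of the action u \<cdot> y = u y \<phi>(u)\<inverse> of the p-group Q on G.  Expanding 1 = g(c) over the basis G
  and counting modulo p shows that c does not vanish on the set T of fixed points.  Any y \<in> T
  satisfies \<phi>(u) = y\<inverse> u y, and T = C_G(Q) y = y C_G(\<phi>(Q)).  Let c_T be the restriction of c to
  T and e' = y\<inverse> e y.  Since e \<in> Z(kC_G(Q)), c_T = e c_T = c_T e', and a second count modulo p
  gives c_T = c_T Br_\<phi>(Q)(i).  Hence Br_\<phi>(Q)(i) e' \<noteq> 0, which forces e' = e_\<phi>(Q): conjugation
  by y\<inverse> realises \<phi> as a morphism of the fusion system.
*)

theory Submission
  imports Defs
begin

lemma conv_gadd_left: "conv G (gadd a b) c = gadd (conv G a c) (conv G b c)"
  by (rule ext) (simp add: conv_def gadd_def distrib_right sum.distrib)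

lemma conv_gadd_right: "conv G c (gadd a b) = gadd (conv G c a) (conv G c b)"
  by (rule ext) (simp add: conv_def gadd_def distrib_left sum.distrib)

lemma conv_gsmult_left: "conv G (gsmult t a) c = gsmult t (conv G a c)"
  by (rule ext) (simp add: conv_def gsmult_def sum_distrib_left mult.assoc)

lemma conv_gsmult_right: "conv G c (gsmult t a) = gsmult t (conv G c a)"
  by (rule ext) (simp add: conv_def gsmult_def sum_distrib_left mult.left_commute[of t])

lemma conv_gzero_left: "conv G gzero c = gzero"
  by (rule ext) (simp add: conv_def gzero_def)

lemma conv_gzero_right: "conv G c gzero = gzero"
  by (rule ext) (simp add: conv_def gzero_def)

definition gsum :: "'x set \<Rightarrow> ('x \<Rightarrow> 'g \<Rightarrow> 'k::field) \<Rightarrow> 'g \<Rightarrow> 'k" where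
  "gsum S F = (\<lambda>z. \<Sum>y\<in>S. F y z)"

lemma conv_gsum_left: "finite S \<Longrightarrow> conv G (gsum S F) c = gsum S (\<lambda>y. conv G (F y) c)"
  by (rule ext) (simp add: conv_def gsum_def sum_distrib_right sum.swap[of _ S])

lemma conv_gsum_right: "finite S \<Longrightarrow> conv G c (gsum S F) = gsum S (\<lambda>y. conv G c (F y))"
  by (rule ext) (simp add: conv_def gsum_def sum_distrib_left sum.swap[of _ S])

lemma gsum_smult_closed_linear:
  fixes N :: "('g \<Rightarrow> 'k::field) set" and g :: "('g \<Rightarrow> 'k) \<Rightarrow> ('g \<Rightarrow> 'k)"
  assumes "finite S" and n: "\<And>y. y \<in> S \<Longrightarrow> n y \<in> N" and z0: "z0 \<in> N"
    and N_gadd: "\<And>a b. a \<in> N \<Longrightarrow> b \<in> N \<Longrightarrow> gadd a b \<in> N"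
    and N_gsmult: "\<And>t a. a \<in> N \<Longrightarrow> gsmult t a \<in> N"
    and g_gadd: "\<forall>m \<in> N. \<forall>m' \<in> N. g (gadd m m') = gadd (g m) (g m')"
    and g_gsmult: "\<forall>t. \<forall>m \<in> N. g (gsmult t m) = gsmult t (g m)"
  shows "gsum S (\<lambda>y. gsmult (t y) (n y)) \<in> N \<and>
    g (gsum S (\<lambda>y. gsmult (t y) (n y))) = gsum S (\<lambda>y. gsmult (t y) (g (n y)))"
  using assms(1) n
proof (induction S rule: finite_induct)
  case empty
  have "gsum {} (\<lambda>y. gsmult (t y) (n y)) = gsmult 0 z0"
    and "gsum {} (\<lambda>y. gsmult (t y) (g (n y))) = gsmult 0 (g z0)"
    by (simp_all add: gsum_def gsmult_def)
  then show ?case using N_gsmult g_gsmult z0 by simp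
next
  case (insert y S)
  have "gsum (insert y S) F = gadd (F y) (gsum S F)" for F :: "'a \<Rightarrow> 'g \<Rightarrow> 'k"
    using insert.hyps by (simp add: gsum_def gadd_def)
  then show ?case using insert N_gadd N_gsmult g_gadd g_gsmult by auto
qed

lemma galg_mono: "H \<subseteq> K \<Longrightarrow> a \<in> galg G H \<Longrightarrow> a \<in> galg G K"
  by (auto simp: galg_def)

definition gproj :: "'g set \<Rightarrow> ('g \<Rightarrow> 'k::field) \<Rightarrow> ('g \<Rightarrow> 'k)" where
  "gproj S a = (\<lambda>z. if z \<in> S then a z else 0)"

definition peirce_space :: "('g,'b) monoid_scheme \<Rightarrow> ('g \<Rightarrow> 'k::field) \<Rightarrow> ('g \<Rightarrow> 'k) \<Rightarrow> ('g \<Rightarrow> 'k) set" where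
  "peirce_space G e i = {conv G (conv G e a) i | a. a \<in> galg G (carrier G)}"

lemma brauer_in_galg: "brauer G Q a \<in> galg G (centr G Q)"
  by (simp add: brauer_def galg_def)

locale finite_group = group G for G :: "('g,'b) monoid_scheme" (structure) +
  assumes finite_carrier: "finite (carrier G)"
begin

lemma inv_m_cancel_left [simp]: "x \<in> carrier G \<Longrightarrow> p \<in> carrier G \<Longrightarrow> inv x \<otimes> (x \<otimes> p) = p"
  by (simp add: m_assoc[symmetric])

lemma m_inv_cancel_left [simp]: "x \<in> carrier G \<Longrightarrow> p \<in> carrier G \<Longrightarrow> x \<otimes> (inv x \<otimes> p) = p"
  by (simp add: m_assoc[symmetric])

lemma sum_reindex_lmult:
  "z \<in> carrier G \<Longrightarrow> (\<Sum>y\<in>carrier G. F y) = (\<Sum>w\<in>carrier G. F (z \<otimes> w))"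
  by (metis surj_const_mult sum.reindex[OF inj_on_cmult, unfolded comp_def])

lemma conv_eval: "x \<in> carrier G \<Longrightarrow> conv G a c x = (\<Sum>y\<in>carrier G. a y * c (inv y \<otimes> x))"
  by (simp add: conv_def)

lemma conv_outside: "x \<notin> carrier G \<Longrightarrow> conv G a c x = 0"
  by (simp add: conv_def)

lemma conv_in_galg: "conv G a c \<in> galg G (carrier G)"
  by (simp add: galg_def conv_def)

lemma conv_assoc: "conv G (conv G a b) c = conv G a (conv G b c)"
proof
  fix x
  show "conv G (conv G a b) c x = conv G a (conv G b c) x"
  proof (cases "x \<in> carrier G")
    case False then show ?thesis by (simp add: conv_outside)
  next
    case x: True
    have inner: "(\<Sum>y\<in>carrier G. b (inv z \<otimes> y) * c (inv y \<otimes> x))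
        = (\<Sum>w\<in>carrier G. b w * c (inv w \<otimes> (inv z \<otimes> x)))" if z: "z \<in> carrier G" for z
    proof -
      have "(\<Sum>y\<in>carrier G. b (inv z \<otimes> y) * c (inv y \<otimes> x))
          = (\<Sum>w\<in>carrier G. b (inv z \<otimes> (z \<otimes> w)) * c (inv (z \<otimes> w) \<otimes> x))"
        by (rule sum_reindex_lmult[OF z])
      also have "\<dots> = (\<Sum>w\<in>carrier G. b w * c (inv w \<otimes> (inv z \<otimes> x)))"
        using z x by (intro sum.cong refl) (simp add: inv_mult_group m_assoc[symmetric])
      finally show ?thesis .
    qed
    have "conv G (conv G a b) c x
        = (\<Sum>y\<in>carrier G. (\<Sum>z\<in>carrier G. a z * b (inv z \<otimes> y)) * c (inv y \<otimes> x))"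
      using x by (simp add: conv_eval)
    also have "\<dots> = (\<Sum>z\<in>carrier G. a z * (\<Sum>y\<in>carrier G. b (inv z \<otimes> y) * c (inv y \<otimes> x)))"
      by (simp only: sum_distrib_left sum_distrib_right mult.assoc) (rule sum.swap)
    also have "\<dots> = conv G a (conv G b c) x"
      using x by (simp add: conv_eval inner)
    finally show ?thesis .
  qed
qed

lemma conv_delta_left:
  "g \<in> carrier G \<Longrightarrow> conv G (delta g) c = (\<lambda>x. if x \<in> carrier G then c (inv g \<otimes> x) else 0)"
proof (rule ext)
  fix x assume g: "g \<in> carrier G"
  have "\<And>y. delta g y * c (inv y \<otimes> x) = (if y = g then c (inv g \<otimes> x) else 0)"
    by (simp add: delta_def)
  then have "(\<Sum>y\<in>carrier G. delta g y * c (inv y \<otimes> x)) = c (inv g \<otimes> x)"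
    using g finite_carrier by simp
  then show "conv G (delta g) c x = (if x \<in> carrier G then c (inv g \<otimes> x) else 0)"
    by (simp add: conv_def)
qed

lemma conv_delta_right:
  "g \<in> carrier G \<Longrightarrow> conv G c (delta g) = (\<lambda>x. if x \<in> carrier G then c (x \<otimes> inv g) else 0)"
proof (rule ext)
  fix x assume g: "g \<in> carrier G"
  show "conv G c (delta g) x = (if x \<in> carrier G then c (x \<otimes> inv g) else 0)"
  proof (cases "x \<in> carrier G")
    case False then show ?thesis by (simp add: conv_outside)
  next
    case x: True
    have "\<And>y. y \<in> carrier G \<Longrightarrow> (inv y \<otimes> x = g) = (y = x \<otimes> inv g)"
      using g x by (metis inv_solve_left inv_solve_right)
    then have "conv G c (delta g) x = (\<Sum>y\<in>carrier G. if y = x \<otimes> inv g then c y else 0)"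
      using x by (auto simp: conv_eval delta_def intro!: sum.cong)
    also have "\<dots> = c (x \<otimes> inv g)" using x g finite_carrier by simp
    finally show ?thesis using x by simp
  qed
qed

lemma delta_in_galg: "g \<in> H \<Longrightarrow> delta g \<in> galg G H"
  by (simp add: galg_def delta_def)

lemma delta_mult:
  "a \<in> carrier G \<Longrightarrow> b \<in> carrier G \<Longrightarrow> conv G (delta a) (delta b) = delta (a \<otimes> b)"
proof (rule ext)
  fix x assume a: "a \<in> carrier G" and b: "b \<in> carrier G"
  have "x \<in> carrier G \<Longrightarrow> (inv a \<otimes> x = b) = (x = a \<otimes> b)"
    using a b by (metis inv_solve_left)
  then show "conv G (delta a) (delta b) x = delta (a \<otimes> b) x"
    unfolding conv_delta_left[OF a] using a b by (auto simp: delta_def)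
qed

lemma conv_delta_one: "a \<in> galg G (carrier G) \<Longrightarrow> conv G a (delta \<one>) = a"
  by (rule ext) (auto simp: conv_delta_right galg_def)

lemma galg_conv_closed:
  assumes H: "subgroup H G" and a: "a \<in> galg G H" and c: "c \<in> galg G H"
  shows "conv G a c \<in> galg G H"
  unfolding galg_def
proof (intro CollectI allI impI)
  fix x assume xH: "x \<notin> H"
  have "a y * c (inv y \<otimes> x) = 0" if "x \<in> carrier G" "y \<in> carrier G" for y
  proof (cases "y \<in> H")
    case True
    have "y \<otimes> (inv y \<otimes> x) = x" using that by (simp add: m_assoc[symmetric])
    then have "inv y \<otimes> x \<notin> H" using subgroup.m_closed[OF H True] xH by metis
    then show ?thesis using c by (simp add: galg_def)
  qed (use a in \<open>simp add: galg_def\<close>)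
  then show "conv G a c x = 0"
    by (cases "x \<in> carrier G") (auto simp: conv_eval conv_outside intro!: sum.neutral)
qed

lemma galg_eq_gsum_delta:
  "a \<in> galg G (carrier G) \<Longrightarrow> a = gsum (carrier G) (\<lambda>y. gsmult (a y) (delta y))"
  by (rule ext) (auto simp: gsum_def gsmult_def galg_def delta_def finite_carrier if_distrib cong: if_cong)

lemma gproj_conv_left:
  assumes H: "subgroup H G" and a: "a \<in> galg G H"
    and S: "\<And>h z. h \<in> H \<Longrightarrow> z \<in> carrier G \<Longrightarrow> h \<otimes> z \<in> S \<longleftrightarrow> z \<in> S"
  shows "gproj S (conv G a c) = conv G a (gproj S c)"
proof
  fix z
  show "gproj S (conv G a c) z = conv G a (gproj S c) z"
  proof (cases "z \<in> carrier G")
    case False then show ?thesis by (simp add: gproj_def conv_outside)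
  next
    case z: True
    have "a w * gproj S c (inv w \<otimes> z) = (if z \<in> S then a w * c (inv w \<otimes> z) else 0)"
      if w: "w \<in> carrier G" for w
    proof (cases "w \<in> H")
      case True
      then have "inv w \<otimes> z \<in> S \<longleftrightarrow> z \<in> S" using S[OF subgroup.m_inv_closed[OF H True]] w z by simp
      then show ?thesis by (simp add: gproj_def)
    qed (use a in \<open>simp add: galg_def\<close>)
    then show ?thesis using z by (simp add: gproj_def conv_eval cong: sum.cong)
  qed
qed

lemma gproj_conv_right:
  assumes H: "subgroup H G" and a: "a \<in> galg G H"
    and S: "\<And>h z. h \<in> H \<Longrightarrow> z \<in> carrier G \<Longrightarrow> z \<otimes> h \<in> S \<longleftrightarrow> z \<in> S"
  shows "gproj S (conv G c a) = conv G (gproj S c) a"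
proof
  fix z
  show "gproj S (conv G c a) z = conv G (gproj S c) a z"
  proof (cases "z \<in> carrier G")
    case False then show ?thesis by (simp add: gproj_def conv_outside)
  next
    case z: True
    have "gproj S c w * a (inv w \<otimes> z) = (if z \<in> S then c w * a (inv w \<otimes> z) else 0)"
      if w: "w \<in> carrier G" for w
    proof (cases "inv w \<otimes> z \<in> H")
      case True
      have "z \<otimes> inv (inv w \<otimes> z) = w" using w z by (simp add: inv_mult_group m_assoc)
      then have "w \<in> S \<longleftrightarrow> z \<in> S" using S[OF subgroup.m_inv_closed[OF H True] z] by simp
      then show ?thesis by (simp add: gproj_def)
    qed (use a in \<open>simp add: galg_def\<close>)
    then show ?thesis using z by (simp add: gproj_def conv_eval cong: sum.cong)
  qed
qed

lemma conv_delta_in_galg: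
  assumes x: "x \<in> carrier G" and S: "S \<subseteq> carrier G" and a: "a \<in> galg G S"
    and SH: "\<And>s. s \<in> S \<Longrightarrow> s \<otimes> x \<in> H"
  shows "conv G a (delta x) \<in> galg G H"
  unfolding galg_def
proof (intro CollectI allI impI)
  fix z assume "z \<notin> H"
  then have "z \<otimes> inv x \<notin> S" if "z \<in> carrier G"
    using SH[of "z \<otimes> inv x"] x that by (auto simp: m_assoc)
  then show "conv G a (delta x) z = 0"
    using a x by (simp add: conv_delta_right galg_def)
qed

lemma peirce_space_gadd:
  assumes "m \<in> peirce_space G e i" and "m' \<in> peirce_space G e i"
  shows "gadd m m' \<in> peirce_space G e i"
proof -
  obtain a a' where "a \<in> galg G (carrier G)" "a' \<in> galg G (carrier G)"
    "m = conv G (conv G e a) i" "m' = conv G (conv G e a') i"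
    using assms by (auto simp: peirce_space_def)
  moreover have "gadd a a' \<in> galg G (carrier G)" using calculation by (simp add: galg_def gadd_def)
  ultimately show ?thesis unfolding peirce_space_def
    by (auto simp: conv_gadd_left conv_gadd_right intro!: exI[of _ "gadd a a'"])
qed

lemma peirce_space_gsmult:
  assumes "m \<in> peirce_space G e i"
  shows "gsmult t m \<in> peirce_space G e i"
proof -
  obtain a where "a \<in> galg G (carrier G)" "m = conv G (conv G e a) i"
    using assms by (auto simp: peirce_space_def)
  moreover have "gsmult t a \<in> galg G (carrier G)" using calculation by (simp add: galg_def gsmult_def)
  ultimately show ?thesis unfolding peirce_space_def
    by (auto simp: conv_gsmult_left conv_gsmult_right intro!: exI[of _ "gsmult t a"])
qed

lemma peirce_space_delta: "y \<in> carrier G \<Longrightarrow> conv G (conv G e (delta y)) i \<in> peirce_space G e i"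
  unfolding peirce_space_def using delta_in_galg by blast

lemma peirce_space_conv_left:
  "m \<in> peirce_space G e i \<Longrightarrow> conv G e e = e \<Longrightarrow> conv G e m = m"
  by (auto simp: peirce_space_def conv_assoc[symmetric])

lemma peirce_space_conv_right:
  "m \<in> peirce_space G e i \<Longrightarrow> conv G i i = i \<Longrightarrow> conv G m i = m"
  by (auto simp: peirce_space_def conv_assoc)

lemma peirce_space_eq_gsum:
  assumes m: "m \<in> peirce_space G e i" and "conv G e e = e" and "conv G i i = i"
  shows "m = gsum (carrier G) (\<lambda>y. gsmult (m y) (conv G (conv G e (delta y)) i))"
proof -
  have "m \<in> galg G (carrier G)" using m by (auto simp: peirce_space_def conv_in_galg)
  then have "m = conv G (conv G e (gsum (carrier G) (\<lambda>y. gsmult (m y) (delta y)))) i"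
    using peirce_space_conv_left[OF assms(1,2)] peirce_space_conv_right[OF assms(1,3)]
      galg_eq_gsum_delta[of m] by (simp add: conv_assoc)
  then show ?thesis
    by (simp add: conv_gsum_right conv_gsum_left finite_carrier conv_gsmult_right conv_gsmult_left)
qed

end

section \<open>Conjugation and the Brauer quotient\<close>

definition conjset :: "('g,'b) monoid_scheme \<Rightarrow> 'g \<Rightarrow> 'g set \<Rightarrow> 'g set" where
  "conjset G x H = (\<lambda>u. x \<otimes>\<^bsub>G\<^esub> u \<otimes>\<^bsub>G\<^esub> inv\<^bsub>G\<^esub> x) ` H"

context finite_group
begin

lemma gconj_eval:
  "x \<in> carrier G \<Longrightarrow> gconj G x a = (\<lambda>z. if z \<in> carrier G then a (inv x \<otimes> z \<otimes> x) else 0)"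
  by (rule ext) (simp add: gconj_def conv_delta_left conv_delta_right m_assoc)

lemma gconj_inv_gconj:
  "x \<in> carrier G \<Longrightarrow> a \<in> galg G (carrier G) \<Longrightarrow> gconj G (inv x) (gconj G x a) = a"
  by (rule ext) (auto simp: gconj_eval galg_def m_assoc)

lemma gconj_gconj_inv:
  "x \<in> carrier G \<Longrightarrow> a \<in> galg G (carrier G) \<Longrightarrow> gconj G x (gconj G (inv x) a) = a"
  by (rule ext) (auto simp: gconj_eval galg_def m_assoc)

lemma gconj_gzero: "gconj G x gzero = gzero"
  by (simp add: gconj_def conv_gzero_left conv_gzero_right)

lemma gconj_conv:
  assumes x: "x \<in> carrier G" and a: "a \<in> galg G (carrier G)"
  shows "gconj G x (conv G a b) = conv G (gconj G x a) (gconj G x b)"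
proof -
  have "conv G (gconj G x a) (gconj G x b)
      = conv G (delta x) (conv G a (conv G (conv G (delta (inv x)) (delta x)) (conv G b (delta (inv x)))))"
    by (simp add: gconj_def conv_assoc)
  also have "\<dots> = gconj G x (conv G a b)"
    using x a by (simp add: delta_mult conv_assoc[symmetric] conv_delta_one) (simp add: gconj_def conv_assoc)
  finally show ?thesis by simp
qed

lemma delta_commute_if_gconj_fixed:
  assumes x: "x \<in> carrier G" and a: "a \<in> galg G (carrier G)" and fixed: "gconj G x a = a"
  shows "conv G (delta x) a = conv G a (delta x)"
proof -
  have "conv G a (delta x) = conv G (delta x) (conv G a (conv G (delta (inv x)) (delta x)))"
    by (subst (1) fixed[symmetric]) (simp add: gconj_def conv_assoc)
  also have "\<dots> = conv G (delta x) a" using x a by (simp add: delta_mult conv_delta_one)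
  finally show ?thesis by simp
qed

lemma conjset_subset: "x \<in> carrier G \<Longrightarrow> H \<subseteq> carrier G \<Longrightarrow> conjset G x H \<subseteq> carrier G"
  by (auto simp: conjset_def)

lemma mem_conjset_iff:
  assumes x: "x \<in> carrier G" and H: "H \<subseteq> carrier G" and z: "z \<in> carrier G"
  shows "z \<in> conjset G x H \<longleftrightarrow> inv x \<otimes> z \<otimes> x \<in> H"
proof
  assume "z \<in> conjset G x H"
  then obtain h where "h \<in> H" "z = x \<otimes> h \<otimes> inv x" by (auto simp: conjset_def)
  then show "inv x \<otimes> z \<otimes> x \<in> H" using x H by (auto simp: m_assoc)
next
  assume "inv x \<otimes> z \<otimes> x \<in> H"
  moreover have "z = x \<otimes> (inv x \<otimes> z \<otimes> x) \<otimes> inv x" using x z by (simp add: m_assoc)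
  ultimately show "z \<in> conjset G x H" unfolding conjset_def by blast
qed

lemma conjset_inv_conjset:
  assumes x: "x \<in> carrier G" and H: "H \<subseteq> carrier G"
  shows "conjset G (inv x) (conjset G x H) = H"
proof -
  have "inv x \<otimes> (x \<otimes> h \<otimes> inv x) \<otimes> inv (inv x) = h" if "h \<in> H" for h
    using x H that by (auto simp: m_assoc)
  moreover have "h = inv x \<otimes> (x \<otimes> h \<otimes> inv x) \<otimes> inv (inv x)" if "h \<in> H" for h
    using x H that by (auto simp: m_assoc)
  ultimately show ?thesis unfolding conjset_def image_image by force
qed

lemma subgroup_conjset:
  assumes x: "x \<in> carrier G" and H: "subgroup H G"
  shows "subgroup (conjset G x H) G"
proof -
  interpret H: subgroup H G by (rule H)
  show ?thesis
  proof (rule subgroupI)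
    show "conjset G x H \<subseteq> carrier G" by (rule conjset_subset[OF x H.subset])
    show "conjset G x H \<noteq> {}" unfolding conjset_def using subgroup.one_closed[OF H] by blast
  next
    fix a assume "a \<in> conjset G x H"
    then obtain h where h: "h \<in> H" "a = x \<otimes> h \<otimes> inv x" by (auto simp: conjset_def)
    then have "inv a = x \<otimes> inv h \<otimes> inv x" using x by (simp add: inv_mult_group m_assoc)
    then show "inv a \<in> conjset G x H" using h(1) by (auto simp: conjset_def)
  next
    fix a b assume "a \<in> conjset G x H" "b \<in> conjset G x H"
    then obtain h k where h: "h \<in> H" "a = x \<otimes> h \<otimes> inv x" and k: "k \<in> H" "b = x \<otimes> k \<otimes> inv x"
      by (auto simp: conjset_def)
    then have "a \<otimes> b = x \<otimes> (h \<otimes> k) \<otimes> inv x" using x by (simp add: m_assoc)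
    then show "a \<otimes> b \<in> conjset G x H" using h(1) k(1) by (auto simp: conjset_def)
  qed
qed

lemma conjset_eq_self:
  assumes Q: "subgroup Q G" and u: "u \<in> Q"
  shows "conjset G u Q = Q"
proof -
  interpret Q: subgroup Q G by (rule Q)
  have "q = u \<otimes> (inv u \<otimes> q \<otimes> u) \<otimes> inv u" if "q \<in> Q" for q
    using u that by (simp add: m_assoc)
  then show ?thesis using u by (force simp: conjset_def)
qed

lemma conj_commute_iff:
  assumes "x \<in> carrier G" "w \<in> carrier G" "u \<in> carrier G"
  shows "(x \<otimes> w \<otimes> inv x) \<otimes> (x \<otimes> u \<otimes> inv x) = (x \<otimes> u \<otimes> inv x) \<otimes> (x \<otimes> w \<otimes> inv x)
    \<longleftrightarrow> w \<otimes> u = u \<otimes> w"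
proof -
  have "(x \<otimes> w \<otimes> inv x) \<otimes> (x \<otimes> u \<otimes> inv x) = x \<otimes> (w \<otimes> u) \<otimes> inv x"
    and "(x \<otimes> u \<otimes> inv x) \<otimes> (x \<otimes> w \<otimes> inv x) = x \<otimes> (u \<otimes> w) \<otimes> inv x"
    using assms by (simp_all add: m_assoc)
  then show ?thesis using assms by (metis inv_closed m_closed r_cancel l_cancel)
qed

lemma centr_subset: "centr G Q \<subseteq> carrier G"
  by (auto simp: centr_def)

lemma subgroup_centr: "Q \<subseteq> carrier G \<Longrightarrow> subgroup (centr G Q) G"
proof (rule subgroupI)
  assume Q: "Q \<subseteq> carrier G"
  show "centr G Q \<subseteq> carrier G" by (rule centr_subset)
  show "centr G Q \<noteq> {}" using Q by (auto simp: centr_def intro!: exI[of _ \<one>])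
  fix a assume a: "a \<in> centr G Q"
  have "inv a \<otimes> u = u \<otimes> inv a" if "u \<in> Q" for u
  proof -
    have "a \<in> carrier G" "u \<in> carrier G" "a \<otimes> u = u \<otimes> a" using a that Q by (auto simp: centr_def)
    then show ?thesis by (metis inv_closed inv_solve_left m_assoc m_closed r_inv r_one)
  qed
  then show "inv a \<in> centr G Q" using a by (simp add: centr_def)
next
  fix a b assume Q: "Q \<subseteq> carrier G" and a: "a \<in> centr G Q" and b: "b \<in> centr G Q"
  have "a \<otimes> b \<otimes> u = u \<otimes> (a \<otimes> b)" if "u \<in> Q" for u
    using a b that Q by (auto simp: centr_def) (metis m_assoc subsetD)
  then show "a \<otimes> b \<in> centr G Q" using a b by (simp add: centr_def)
qed

lemma centr_conjset:
  assumes x: "x \<in> carrier G" and Q: "Q \<subseteq> carrier G"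
  shows "centr G (conjset G x Q) = conjset G x (centr G Q)"
proof (rule Set.set_eqI)
  fix z
  show "z \<in> centr G (conjset G x Q) \<longleftrightarrow> z \<in> conjset G x (centr G Q)"
  proof (cases "z \<in> carrier G")
    case False then show ?thesis using conjset_subset[OF x centr_subset] by (auto simp: centr_def)
  next
    case z: True
    define w where "w = inv x \<otimes> z \<otimes> x"
    have w: "w \<in> carrier G" and zw: "z = x \<otimes> w \<otimes> inv x" using x z by (simp_all add: w_def m_assoc)
    have "z \<in> centr G (conjset G x Q) \<longleftrightarrow> (\<forall>u\<in>Q. z \<otimes> (x \<otimes> u \<otimes> inv x) = (x \<otimes> u \<otimes> inv x) \<otimes> z)"
      using z by (auto simp: centr_def conjset_def)
    also have "\<dots> \<longleftrightarrow> w \<in> centr G Q"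
      unfolding zw using conj_commute_iff[OF x w] Q w by (auto simp: centr_def)
    finally show ?thesis using mem_conjset_iff[OF x centr_subset z] by (simp add: w_def)
  qed
qed

lemma conj_mem_centr_iff:
  assumes S: "subgroup S G" and v: "v \<in> S" and d: "d \<in> carrier G"
  shows "v \<otimes> d \<otimes> inv v \<in> centr G S \<longleftrightarrow> d \<in> centr G S"
proof -
  have v': "v \<in> carrier G" using v subgroup.subset[OF S] by auto
  have "centr G S = conjset G v (centr G S)"
    using centr_conjset[OF v' subgroup.subset[OF S]] conjset_eq_self[OF S v] by simp
  then have "v \<otimes> d \<otimes> inv v \<in> centr G S \<longleftrightarrow> v \<otimes> d \<otimes> inv v \<in> conjset G v (centr G S)" by simp
  also have "\<dots> \<longleftrightarrow> d \<in> centr G S" using mem_conjset_iff[OF v' centr_subset] v' d by (simp add: m_assoc)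
  finally show ?thesis .
qed

lemma gconj_galg_conjset:
  "x \<in> carrier G \<Longrightarrow> H \<subseteq> carrier G \<Longrightarrow> a \<in> galg G H \<Longrightarrow> gconj G x a \<in> galg G (conjset G x H)"
  by (auto simp: galg_def gconj_eval mem_conjset_iff)

lemma brauer_gconj:
  assumes x: "x \<in> carrier G" and Q: "Q \<subseteq> carrier G"
  shows "gconj G x (brauer G Q a) = brauer G (conjset G x Q) (gconj G x a)"
  by (rule ext) (use x mem_conjset_iff[OF x centr_subset] in
      \<open>auto simp: gconj_eval brauer_def centr_conjset[OF x Q] centr_subset[THEN subsetD]\<close>)

lemma fixed_pts_delta_commute:
  "a \<in> fixed_pts G P \<Longrightarrow> v \<in> P \<Longrightarrow> P \<subseteq> carrier G \<Longrightarrow> conv G (delta v) a = conv G a (delta v)"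
  by (rule delta_commute_if_gconj_fixed) (auto simp: fixed_pts_def)

lemma fixed_pts_conj:
  assumes a: "a \<in> fixed_pts G P" and P: "subgroup P G" and v: "v \<in> P" and d: "d \<in> carrier G"
  shows "a (v \<otimes> d \<otimes> inv v) = a d"
proof -
  have "gconj G (inv v) a d = a d"
    using a subgroup.m_inv_closed[OF P v] by (simp add: fixed_pts_def)
  moreover have v': "v \<in> carrier G" using subgroup.subset[OF P] v by blast
  ultimately show ?thesis using d by (simp add: gconj_eval)
qed

end

lemma eQ_spec:
  assumes "\<exists>!e. is_block G (centr G Q) e \<and> brauer G Q i \<in> {conv G a e |a. a \<in> galg G (centr G Q)}"
  shows "is_block G (centr G Q) (eQ G i Q) \<and>
    brauer G Q i \<in> {conv G a (eQ G i Q) |a. a \<in> galg G (centr G Q)}"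
  unfolding eQ_def by (rule theI'[OF assms])

lemma eQ_unique:
  assumes "\<exists>!e. is_block G (centr G Q) e \<and> brauer G Q i \<in> {conv G a e |a. a \<in> galg G (centr G Q)}"
    and "is_block G (centr G Q) e" and "brauer G Q i \<in> {conv G a e |a. a \<in> galg G (centr G Q)}"
  shows "eQ G i Q = e"
  using eQ_spec[OF assms(1)] assms by blast

lemma almost_source_unique_block:
  "almost_source G b P i \<Longrightarrow> subgroup Q G \<Longrightarrow> Q \<subseteq> P \<Longrightarrow>
    \<exists>!e. is_block G (centr G Q) e \<and> brauer G Q i \<in> {conv G a e |a. a \<in> galg G (centr G Q)}"
  unfolding almost_source_def by blast

lemma almost_source_fixed_pts: "almost_source G b P i \<Longrightarrow> i \<in> fixed_pts G P"
  by (simp add: almost_source_def)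

lemma almost_source_idem: "almost_source G b P i \<Longrightarrow> conv G i i = i"
  by (simp add: almost_source_def)

context finite_group
begin

lemma gcenter_commute: "z \<in> gcenter G H \<Longrightarrow> a \<in> galg G H \<Longrightarrow> conv G z a = conv G a z"
  by (simp add: gcenter_def)

lemma gconj_gcenter:
  fixes z :: "'g \<Rightarrow> 'k::field"
  assumes x: "x \<in> carrier G" and H: "H \<subseteq> carrier G" and z: "z \<in> gcenter G H"
  shows "gconj G x z \<in> gcenter G (conjset G x H)"
  unfolding gcenter_def
proof (intro CollectI conjI ballI)
  show "gconj G x z \<in> galg G (conjset G x H)"
    using gconj_galg_conjset[OF x H] z unfolding gcenter_def by blast
  fix a :: "'g \<Rightarrow> 'k" assume a: "a \<in> galg G (conjset G x H)"
  define a' where "a' = gconj G (inv x) a"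
  have a': "a' \<in> galg G H"
    using gconj_galg_conjset[OF inv_closed[OF x] conjset_subset[OF x H] a] conjset_inv_conjset[OF x H]
    by (simp add: a'_def)
  have a_eq: "a = gconj G x a'"
    using gconj_gconj_inv[OF x galg_mono[OF conjset_subset[OF x H] a]] by (simp add: a'_def)
  have z': "z \<in> galg G (carrier G)" using z H by (auto simp: gcenter_def intro: galg_mono)
  show "conv G (gconj G x z) a = conv G a (gconj G x z)"
    unfolding a_eq using gcenter_commute[OF z a'] gconj_conv[OF x] z' galg_mono[OF H a'] by metis
qed

lemma is_block_gconj:
  assumes x: "x \<in> carrier G" and H: "H \<subseteq> carrier G" and e: "is_block G H e"
  shows "is_block G (conjset G x H) (gconj G x e)"
  unfolding is_block_def
proof (intro conjI ballI impI)
  have eH: "e \<in> gcenter G H" and ee: "conv G e e = e" and "e \<noteq> gzero"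
    and prim: "\<And>c. c \<in> gcenter G H \<Longrightarrow> conv G c c = c \<Longrightarrow> conv G c e = c \<Longrightarrow> c = gzero \<or> c = e"
    using e by (auto simp: is_block_def)
  have e': "e \<in> galg G (carrier G)" using eH H by (auto simp: gcenter_def intro: galg_mono)
  show "gconj G x e \<in> gcenter G (conjset G x H)" by (rule gconj_gcenter[OF x H eH])
  show "conv G (gconj G x e) (gconj G x e) = gconj G x e" using gconj_conv[OF x e', of e] ee by simp
  show "gconj G x e \<noteq> gzero"
    using gconj_inv_gconj[OF x e'] gconj_gzero \<open>e \<noteq> gzero\<close> by metis
  fix c assume c: "c \<in> gcenter G (conjset G x H)"
    and "conv G c c = c \<and> conv G c (gconj G x e) = c"
  then have cc: "conv G c c = c" and ce: "conv G c (gconj G x e) = c" by auto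
  have c': "c \<in> galg G (carrier G)"
    using c conjset_subset[OF x H] by (auto simp: gcenter_def intro: galg_mono)
  define d where "d = gconj G (inv x) c"
  have "d \<in> gcenter G H"
    using gconj_gcenter[OF inv_closed[OF x] conjset_subset[OF x H] c] conjset_inv_conjset[OF x H]
    by (simp add: d_def)
  moreover have "conv G d d = d" using gconj_conv[OF inv_closed[OF x] c', of c] cc by (simp add: d_def)
  moreover have "conv G d e = d"
    using gconj_conv[OF inv_closed[OF x] c', of "gconj G x e"] ce gconj_inv_gconj[OF x e']
    by (simp add: d_def)
  ultimately have "d = gzero \<or> d = e" by (rule prim)
  moreover have "c = gconj G x d" using gconj_gconj_inv[OF x c'] by (simp add: d_def)
  ultimately show "c = gzero \<or> c = gconj G x e" by (auto simp: gconj_gzero)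
qed

lemma block_eq_if_conv_nonzero:
  fixes e1 e2 :: "'g \<Rightarrow> 'k::field"
  assumes H: "subgroup H G" and b1: "is_block G H e1" and b2: "is_block G H e2"
    and nz: "conv G e1 e2 \<noteq> gzero"
  shows "e1 = e2"
proof -
  have c1: "e1 \<in> gcenter G H" and c2: "e2 \<in> gcenter G H"
    and i1: "conv G e1 e1 = e1" and i2: "conv G e2 e2 = e2" using b1 b2 by (auto simp: is_block_def)
  have g1: "e1 \<in> galg G H" and g2: "e2 \<in> galg G H" using c1 c2 by (auto simp: gcenter_def)
  have comm: "conv G e2 e1 = conv G e1 e2" using gcenter_commute[OF c2 g1] .
  define z where "z = conv G e1 e2"
  have "z \<in> gcenter G H"
    unfolding gcenter_def
  proof (intro CollectI conjI ballI)
    show "z \<in> galg G H" unfolding z_def by (rule galg_conv_closed[OF H g1 g2])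
    fix a :: "'g \<Rightarrow> 'k" assume a: "a \<in> galg G H"
    have "conv G z a = conv G e1 (conv G a e2)" by (simp add: z_def conv_assoc gcenter_commute[OF c2 a])
    also have "\<dots> = conv G (conv G a e1) e2" by (simp add: conv_assoc[symmetric] gcenter_commute[OF c1 a])
    finally show "conv G z a = conv G a z" by (simp add: z_def conv_assoc)
  qed
  moreover have "conv G z z = z"
    using i1 i2 comm by (metis z_def conv_assoc)
  moreover have "conv G z e2 = z" and "conv G z e1 = z"
    using i1 i2 comm by (metis z_def conv_assoc)+
  ultimately have "z = e2" and "z = e1" using b1 b2 nz by (auto simp: is_block_def z_def)
  then show ?thesis by simp
qed

lemma eQ_eq_if_conv_brauer_nonzero:
  assumes i: "almost_source G b P i" and Q: "subgroup Q G" "Q \<subseteq> P"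
    and e: "is_block G (centr G Q) e" and nz: "conv G (brauer G Q i) e \<noteq> gzero"
  shows "eQ G i Q = e"
proof -
  have EQ: "is_block G (centr G Q) (eQ G i Q)"
    and "brauer G Q i \<in> {conv G a (eQ G i Q) |a. a \<in> galg G (centr G Q)}"
    using eQ_spec i Q unfolding almost_source_def by blast+
  then obtain a where "brauer G Q i = conv G a (eQ G i Q)" by blast
  then have "conv G (eQ G i Q) e \<noteq> gzero" using nz by (metis conv_assoc conv_gzero_right)
  then show ?thesis
    by (rule block_eq_if_conv_nonzero[OF subgroup_centr[OF subgroup.subset[OF Q(1)]] EQ e])
qed

lemma gconj_eQ:
  assumes i: "almost_source G b P i" and P: "subgroup P G" and u: "u \<in> P"
    and Q: "subgroup Q G" "Q \<subseteq> P"
  shows "gconj G u (eQ G i Q) = eQ G i (conjset G u Q)"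
proof -
  have u': "u \<in> carrier G" and Q': "Q \<subseteq> carrier G"
    using u Q subgroup.subset[OF P] by auto
  have uQ: "subgroup (conjset G u Q) G" "conjset G u Q \<subseteq> P"
    using subgroup_conjset[OF u' Q(1)] Q u subgroup.m_closed[OF P] subgroup.m_inv_closed[OF P]
    by (auto simp: conjset_def)
  have uniq: "\<exists>!e. is_block G (centr G Q') e \<and> brauer G Q' i \<in> {conv G a e |a. a \<in> galg G (centr G Q')}"
    if "subgroup Q' G" "Q' \<subseteq> P" for Q'
    using i that unfolding almost_source_def by blast
  obtain a where a: "a \<in> galg G (centr G Q)" and Br: "brauer G Q i = conv G a (eQ G i Q)"
    and EQ: "is_block G (centr G Q) (eQ G i Q)"
    using eQ_spec[OF uniq[OF Q]] by blast
  have i_fixed: "gconj G u i = i" using almost_source_fixed_pts[OF i] u by (simp add: fixed_pts_def)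
  have "brauer G (conjset G u Q) i = conv G (gconj G u a) (gconj G u (eQ G i Q))"
    using brauer_gconj[OF u' Q', of i] i_fixed Br gconj_conv[OF u' galg_mono[OF centr_subset a]] by simp
  moreover have "gconj G u a \<in> galg G (centr G (conjset G u Q))"
    using gconj_galg_conjset[OF u' centr_subset a] centr_conjset[OF u' Q'] by simp
  moreover have "is_block G (centr G (conjset G u Q)) (gconj G u (eQ G i Q))"
    using is_block_gconj[OF u' centr_subset EQ] centr_conjset[OF u' Q'] by simp
  ultimately show ?thesis by (intro eQ_unique[OF uniq[OF uQ], symmetric]) blast+
qed


lemma is_block_eQ:
  "almost_source G b P i \<Longrightarrow> subgroup Q G \<Longrightarrow> Q \<subseteq> P \<Longrightarrow> is_block G (centr G Q) (eQ G i Q)"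
  using eQ_spec[OF almost_source_unique_block] by blast

lemma eQ_in_galg:
  assumes "almost_source G b P i" "subgroup Q G" "Q \<subseteq> P"
  shows "eQ G i Q \<in> galg G (carrier G)"
proof -
  have "eQ G i Q \<in> gcenter G (centr G Q)" using is_block_eQ[OF assms] unfolding is_block_def by blast
  then have "eQ G i Q \<in> galg G (centr G Q)" unfolding gcenter_def by blast
  then show ?thesis by (rule galg_mono[OF centr_subset])
qed

lemma delta_commute_eQ:
  assumes i: "almost_source G b P i" and P: "subgroup P G" and Q: "subgroup Q G" "Q \<subseteq> P"
    and u: "u \<in> Q"
  shows "conv G (delta u) (eQ G i Q) = conv G (eQ G i Q) (delta u)"
proof -
  have "gconj G u (eQ G i Q) = eQ G i (conjset G u Q)" using gconj_eQ[OF i P _ Q] u Q(2) by blast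
  then have "gconj G u (eQ G i Q) = eQ G i Q" by (simp add: conjset_eq_self[OF Q(1) u])
  then show ?thesis
    using delta_commute_if_gconj_fixed eQ_in_galg[OF i Q] u subgroup.subset[OF Q(1)] by blast
qed
end

section \<open>Counting modulo \<open>p\<close>\<close>

lemma group_action_of_action:
  fixes H :: "('a,'c) monoid_scheme" (structure)
  assumes "group H"
    and closed: "\<And>u x. u \<in> carrier H \<Longrightarrow> x \<in> E \<Longrightarrow> act u x \<in> E"
    and one: "\<And>x. x \<in> E \<Longrightarrow> act \<one> x = x"
    and comp: "\<And>u v x. u \<in> carrier H \<Longrightarrow> v \<in> carrier H \<Longrightarrow> x \<in> E \<Longrightarrow>
      act (u \<otimes> v) x = act u (act v x)"
  shows "group_action H E (\<lambda>u. \<lambda>x\<in>E. act u x)"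
proof -
  interpret H: group H by fact
  have inv_act: "act (inv u) (act u x) = x" "act u (act (inv u) x) = x"
    if "u \<in> carrier H" "x \<in> E" for u x
    using that comp[symmetric] one by (simp_all add: closed)
  have bij: "(\<lambda>x\<in>E. act u x) \<in> carrier (BijGroup E)" if u: "u \<in> carrier H" for u
  proof -
    have "bij_betw (\<lambda>x\<in>E. act u x) E E"
      by (rule bij_betwI[where g="\<lambda>x\<in>E. act (inv u) x"]) (use u closed inv_act in auto)
    then show ?thesis by (simp add: BijGroup_def Bij_def)
  qed
  show ?thesis
    unfolding group_action_def group_hom_def group_hom_axioms_def
  proof (intro conjI \<open>group H\<close> group_BijGroup homI bij)
    fix u v assume "u \<in> carrier H" "v \<in> carrier H"
    then show "(\<lambda>x\<in>E. act (u \<otimes> v) x) = (\<lambda>x\<in>E. act u x) \<otimes>\<^bsub>BijGroup E\<^esub> (\<lambda>x\<in>E. act v x)"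
      using bij comp closed by (auto simp: BijGroup_def compose_def)
  qed
qed

context group_action
begin

lemma orbit_eq_singleton_iff:
  assumes x: "x \<in> E"
  shows "orbit G \<phi> x = {x} \<longleftrightarrow> (\<forall>g\<in>carrier G. \<phi> g x = x)"
proof
  assume "orbit G \<phi> x = {x}"
  moreover have "\<phi> g x \<in> orbit G \<phi> x" if "g \<in> carrier G" for g
    using that unfolding orbit_def by blast
  ultimately show "\<forall>g\<in>carrier G. \<phi> g x = x" by blast
next
  assume "\<forall>g\<in>carrier G. \<phi> g x = x"
  then have "orbit G \<phi> x \<subseteq> {x}" unfolding orbit_def by blast
  then show "orbit G \<phi> x = {x}" using orbit_refl[OF x] by blast
qed

lemma fixed_point_in_orbit:
  assumes x: "x \<in> E" and y: "y \<in> orbit G \<phi> x" and fixed: "\<forall>g\<in>carrier G. \<phi> g y = y"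
  shows "\<forall>g\<in>carrier G. \<phi> g x = x"
proof -
  obtain g where g: "g \<in> carrier G" "y = \<phi> g x" using y by (auto simp: orbit_def)
  then have "x \<in> orbit G \<phi> y" by (intro orbit_sym[OF x element_image[OF g(1) x g(2)[symmetric]] y])
  moreover have "orbit G \<phi> y = {y}"
    using orbit_eq_singleton_iff element_image[OF g(1) x g(2)[symmetric]] fixed by blast
  ultimately show ?thesis using fixed by simp
qed

lemma sum_nontrivial_orbit_eq_zero:
  fixes h :: "'c \<Rightarrow> 'k::field"
  assumes x: "x \<in> E" and moved: "\<not> (\<forall>g\<in>carrier G. \<phi> g x = x)"
    and p: "Factorial_Ring.prime (p::nat)" and char: "CHAR('k) = p" and order: "order G dvd p ^ n"
    and h: "\<And>g. g \<in> carrier G \<Longrightarrow> h (\<phi> g x) = h x"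
  shows "(\<Sum>y\<in>orbit G \<phi> x. h y) = 0"
proof -
  have "card (orbit G \<phi> x) dvd p ^ n"
    using orbit_stabilizer_theorem[OF x] order by (metis dvd_triv_left dvd_trans)
  then obtain j where j: "card (orbit G \<phi> x) = p ^ j" using divides_primepow_nat[OF p] by blast
  moreover have "card (orbit G \<phi> x) \<noteq> 1"
  proof
    assume "card (orbit G \<phi> x) = 1"
    then obtain y where "orbit G \<phi> x = {y}" by (auto simp: card_1_singleton_iff)
    then have "orbit G \<phi> x = {x}" using orbit_refl[OF x] by simp
    then show False using orbit_eq_singleton_iff[OF x] moved by simp
  qed
  ultimately have "p dvd card (orbit G \<phi> x)" by (cases j) simp_all
  then have "(of_nat (card (orbit G \<phi> x)) :: 'k) = 0" using char by (simp add: of_nat_eq_0_iff_char_dvd)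
  moreover have "(\<Sum>y\<in>orbit G \<phi> x. h y) = (\<Sum>y\<in>orbit G \<phi> x. h x)"
    using h by (intro sum.cong) (auto simp: orbit_def)
  ultimately show ?thesis by simp
qed

lemma sum_eq_sum_fixed_points:
  fixes h :: "'c \<Rightarrow> 'k::field"
  assumes E: "finite E" and p: "Factorial_Ring.prime (p::nat)" and char: "CHAR('k) = p" and order: "order G dvd p ^ n"
    and h: "\<And>g x. g \<in> carrier G \<Longrightarrow> x \<in> E \<Longrightarrow> h (\<phi> g x) = h x"
  shows "(\<Sum>x\<in>E. h x) = (\<Sum>x\<in>{x\<in>E. \<forall>g\<in>carrier G. \<phi> g x = x}. h x)"
proof -
  define F where "F = {x\<in>E. \<forall>g\<in>carrier G. \<phi> g x = x}"
  define h' where "h' x = (if x \<in> F then h x else 0)" for x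
  have "(\<Sum>y\<in>orb. h y) = (\<Sum>y\<in>orb. h' y)" if orb: "orb \<in> orbits G E \<phi>" for orb
  proof -
    obtain x where x: "x \<in> E" and orb: "orb = orbit G \<phi> x" using orb by (auto simp: orbits_def)
    show ?thesis
    proof (cases "x \<in> F")
      case True
      then have "orb = {x}" using orbit_eq_singleton_iff[OF x] orb by (simp add: F_def)
      then show ?thesis using True by (simp add: h'_def)
    next
      case False
      then have "y \<notin> F" if "y \<in> orb" for y
        using fixed_point_in_orbit[OF x] that orb x by (auto simp: F_def)
      then have "(\<Sum>y\<in>orb. h' y) = 0" by (simp add: h'_def)
      moreover have "(\<Sum>y\<in>orb. h y) = 0"
        using sum_nontrivial_orbit_eq_zero[OF x _ p char order, of h] False h x orb by (simp add: F_def)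
      ultimately show ?thesis by simp
    qed
  qed
  then have "(\<Sum>x\<in>E. h x) = (\<Sum>x\<in>E. h' x)"
    unfolding disjoint_sum[OF E, symmetric] by (rule sum.cong[OF refl])
  also have "\<dots> = (\<Sum>x\<in>F. h x)"
    using E by (intro sum.mono_neutral_cong_right) (auto simp: h'_def F_def)
  finally show ?thesis by (simp add: F_def)
qed

end

lemma (in group) card_subgroup_of_p_subgroup:
  assumes p: "Factorial_Ring.prime p" and P: "p_subgroup G p P" and Q: "subgroup Q G" "Q \<subseteq> P"
  shows "\<exists>n. card Q = p ^ n"
proof -
  obtain m where P': "subgroup P G" and card: "card P = p ^ m" using P by (auto simp: p_subgroup_def)
  have "group (G\<lparr>carrier := P\<rparr>)" by (rule subgroup.subgroup_is_group[OF P' is_group])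
  moreover have "subgroup Q (G\<lparr>carrier := P\<rparr>)" by (rule subgroup_incl[OF Q(1) P' Q(2)])
  ultimately have "card (rcosets\<^bsub>G\<lparr>carrier := P\<rparr>\<^esub> Q) * card Q = card P"
    using group.lagrange by (fastforce simp: order_def)
  then have "card Q dvd p ^ m" using card by (metis dvd_triv_right)
  then show ?thesis using divides_primepow_nat[OF p] by blast
qed

section \<open>The twisted action of \<open>Q\<close> on \<open>G\<close>\<close>

text \<open>The fixed points of \<open>Q\<close> acting on \<open>G\<close> by \<open>u \<cdot> y = u y \<phi>(u)\<^sup>-\<^sup>1\<close>; equivalently,
  the \<open>y\<close> such that conjugation by \<open>y\<^sup>-\<^sup>1\<close> restricts to \<open>\<phi>\<close> on \<open>Q\<close>.\<close>

definition twisted_fixed :: "('g,'b) monoid_scheme \<Rightarrow> 'g set \<Rightarrow> ('g \<Rightarrow> 'g) \<Rightarrow> 'g set" where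
  "twisted_fixed G Q \<phi> = {y \<in> carrier G. \<forall>u\<in>Q. u \<otimes>\<^bsub>G\<^esub> y = y \<otimes>\<^bsub>G\<^esub> \<phi> u}"

locale twisted_action = finite_group G for G :: "('g,'b) monoid_scheme" (structure) +
  fixes Q :: "'g set" and \<phi> :: "'g \<Rightarrow> 'g"
  assumes subgroup_Q: "subgroup Q G"
    and \<phi>_closed: "u \<in> Q \<Longrightarrow> \<phi> u \<in> carrier G"
    and \<phi>_mult: "u \<in> Q \<Longrightarrow> v \<in> Q \<Longrightarrow> \<phi> (u \<otimes> v) = \<phi> u \<otimes> \<phi> v"
begin

lemma Q_closed: "u \<in> Q \<Longrightarrow> u \<in> carrier G"
  using subgroup.subset[OF subgroup_Q] by blast

lemma \<phi>_one: "\<phi> \<one> = \<one>"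
  using \<phi>_mult[of \<one> \<one>] \<phi>_closed subgroup.one_closed[OF subgroup_Q] by simp

lemma \<phi>_inv:
  assumes u: "u \<in> Q"
  shows "\<phi> (inv u) = inv (\<phi> u)"
proof -
  have iu: "inv u \<in> Q" using subgroup.m_inv_closed[OF subgroup_Q u] .
  have "\<phi> (inv u) \<otimes> \<phi> u = \<one>" using \<phi>_mult[OF iu u] u Q_closed \<phi>_one by simp
  then show ?thesis using \<phi>_closed[OF u] \<phi>_closed[OF iu] by (rule inv_equality[symmetric])
qed

lemma subgroup_image: "subgroup (\<phi> ` Q) G"
proof (rule subgroupI)
  show "\<phi> ` Q \<subseteq> carrier G" "\<phi> ` Q \<noteq> {}"
    using \<phi>_closed subgroup.one_closed[OF subgroup_Q] by auto
  show "inv a \<in> \<phi> ` Q" if a: "a \<in> \<phi> ` Q" for a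
  proof -
    obtain u where "u \<in> Q" "a = \<phi> u" using a by blast
    then show ?thesis using \<phi>_inv subgroup.m_inv_closed[OF subgroup_Q] by (metis image_eqI)
  qed
  show "a \<otimes> b \<in> \<phi> ` Q" if ab: "a \<in> \<phi> ` Q" "b \<in> \<phi> ` Q" for a b
  proof -
    obtain u v where "u \<in> Q" "v \<in> Q" "a = \<phi> u" "b = \<phi> v" using ab by blast
    then show ?thesis using \<phi>_mult subgroup.m_closed[OF subgroup_Q] by (metis image_eqI)
  qed
qed

definition act :: "'g \<Rightarrow> 'g \<Rightarrow> 'g" where
  "act u y = u \<otimes> y \<otimes> inv (\<phi> u)"

lemma act_closed: "u \<in> Q \<Longrightarrow> y \<in> carrier G \<Longrightarrow> act u y \<in> carrier G"
  by (simp add: act_def Q_closed \<phi>_closed)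

lemma act_eq_iff: "u \<in> Q \<Longrightarrow> y \<in> carrier G \<Longrightarrow> act u y = y \<longleftrightarrow> u \<otimes> y = y \<otimes> \<phi> u"
  using inv_solve_right[of y "u \<otimes> y" "\<phi> u"] Q_closed \<phi>_closed by (auto simp: act_def)

lemma group_action_act:
  "group_action (G\<lparr>carrier := Q\<rparr>) (carrier G) (\<lambda>u. \<lambda>y\<in>carrier G. act u y)"
proof (rule group_action_of_action)
  show "group (G\<lparr>carrier := Q\<rparr>)" by (rule subgroup.subgroup_is_group[OF subgroup_Q is_group])
  show "act \<one>\<^bsub>G\<lparr>carrier := Q\<rparr>\<^esub> y = y" if "y \<in> carrier G" for y
    using that by (simp add: act_def \<phi>_one)
  fix u v y assume "u \<in> carrier (G\<lparr>carrier := Q\<rparr>)" "v \<in> carrier (G\<lparr>carrier := Q\<rparr>)" "y \<in> carrier G"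
  then show "act (u \<otimes>\<^bsub>G\<lparr>carrier := Q\<rparr>\<^esub> v) y = act u (act v y)"
    using Q_closed \<phi>_closed by (simp add: act_def \<phi>_mult inv_mult_group m_assoc)
qed (simp add: act_closed)

lemma sum_eq_sum_twisted_fixed:
  fixes h :: "'g \<Rightarrow> 'k::field"
  assumes p: "Factorial_Ring.prime p" and char: "CHAR('k) = p" and card: "card Q = p ^ n"
    and h: "\<And>u y. u \<in> Q \<Longrightarrow> y \<in> carrier G \<Longrightarrow> h (act u y) = h y"
  shows "(\<Sum>y\<in>carrier G. h y) = (\<Sum>y\<in>twisted_fixed G Q \<phi>. h y)"
proof -
  interpret A: group_action "G\<lparr>carrier := Q\<rparr>" "carrier G" "\<lambda>u. \<lambda>y\<in>carrier G. act u y"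
    by (rule group_action_act)
  have "{y\<in>carrier G. \<forall>u\<in>carrier (G\<lparr>carrier := Q\<rparr>). (\<lambda>y\<in>carrier G. act u y) y = y}
      = twisted_fixed G Q \<phi>"
    by (auto simp: twisted_fixed_def act_eq_iff)
  then show ?thesis
    using A.sum_eq_sum_fixed_points[OF finite_carrier p char, of n h] card h by (simp add: order_def)
qed


lemma twisted_fixed_subset: "twisted_fixed G Q \<phi> \<subseteq> carrier G"
  by (auto simp: twisted_fixed_def)

lemma twisted_fixed_conj:
  assumes y: "y \<in> twisted_fixed G Q \<phi>" and u: "u \<in> Q"
  shows "\<phi> u = inv y \<otimes> u \<otimes> y"
  using y u Q_closed \<phi>_closed by (simp add: twisted_fixed_def m_assoc)

lemma centr_mult_twisted_fixed_iff:
  assumes w: "w \<in> centr G Q" and z: "z \<in> carrier G"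
  shows "w \<otimes> z \<in> twisted_fixed G Q \<phi> \<longleftrightarrow> z \<in> twisted_fixed G Q \<phi>"
proof -
  have w': "w \<in> carrier G" using w centr_subset by auto
  have "u \<otimes> (w \<otimes> z) = w \<otimes> z \<otimes> \<phi> u \<longleftrightarrow> u \<otimes> z = z \<otimes> \<phi> u" if u: "u \<in> Q" for u
  proof -
    have "u \<otimes> (w \<otimes> z) = w \<otimes> (u \<otimes> z)"
      using w u w' z Q_closed by (simp add: centr_def m_assoc[symmetric])
    then show ?thesis using w' z u Q_closed \<phi>_closed by (simp add: m_assoc)
  qed
  then show ?thesis using w' z by (simp add: twisted_fixed_def)
qed

lemma twisted_fixed_mult_centr:
  assumes w: "w \<in> twisted_fixed G Q \<phi>" and d: "d \<in> centr G (\<phi> ` Q)"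
  shows "w \<otimes> d \<in> twisted_fixed G Q \<phi>"
proof -
  have w': "w \<in> carrier G" and d': "d \<in> carrier G" using w d by (auto simp: twisted_fixed_def centr_def)
  have "u \<otimes> (w \<otimes> d) = w \<otimes> d \<otimes> \<phi> u" if u: "u \<in> Q" for u
  proof -
    have "u \<otimes> (w \<otimes> d) = w \<otimes> (\<phi> u \<otimes> d)"
      using w u w' d' Q_closed \<phi>_closed by (simp add: twisted_fixed_def m_assoc[symmetric])
    also have "\<dots> = w \<otimes> d \<otimes> \<phi> u" using d u w' d' \<phi>_closed by (simp add: centr_def m_assoc)
    finally show ?thesis .
  qed
  then show ?thesis using w' d' by (simp add: twisted_fixed_def)
qed

lemma mult_centr_twisted_fixed_iff:
  assumes d: "d \<in> centr G (\<phi> ` Q)" and w: "w \<in> carrier G"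
  shows "w \<otimes> d \<in> twisted_fixed G Q \<phi> \<longleftrightarrow> w \<in> twisted_fixed G Q \<phi>"
proof
  have C: "subgroup (centr G (\<phi> ` Q)) G" using subgroup_centr \<phi>_closed by blast
  have "d \<in> carrier G" using d centr_subset by blast
  then have "w \<otimes> d \<otimes> inv d = w" using w by (simp add: m_assoc)
  then show "w \<otimes> d \<in> twisted_fixed G Q \<phi> \<Longrightarrow> w \<in> twisted_fixed G Q \<phi>"
    using twisted_fixed_mult_centr[OF _ subgroup.m_inv_closed[OF C d]] by metis
qed (rule twisted_fixed_mult_centr[OF _ d])

lemma inv_mult_twisted_fixed:
  assumes w: "w \<in> twisted_fixed G Q \<phi>" and z: "z \<in> twisted_fixed G Q \<phi>"
  shows "inv w \<otimes> z \<in> centr G (\<phi> ` Q)"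
proof -
  have w': "w \<in> carrier G" and z': "z \<in> carrier G" using w z by (auto simp: twisted_fixed_def)
  have "inv w \<otimes> z \<otimes> \<phi> u = \<phi> u \<otimes> (inv w \<otimes> z)" if u: "u \<in> Q" for u
  proof -
    have "z \<otimes> \<phi> u = u \<otimes> z" using z u by (simp add: twisted_fixed_def)
    then have "inv w \<otimes> z \<otimes> \<phi> u = inv w \<otimes> u \<otimes> z" using w' z' u Q_closed \<phi>_closed by (simp add: m_assoc)
    also have "\<dots> = \<phi> u \<otimes> (inv w \<otimes> z)"
      using twisted_fixed_conj[OF w u] w' z' u Q_closed by (simp add: m_assoc)
    finally show ?thesis .
  qed
  then show ?thesis using w' z' by (auto simp: centr_def)
qed

lemma mult_inv_twisted_fixed:
  assumes t: "t \<in> twisted_fixed G Q \<phi>" and y: "y \<in> twisted_fixed G Q \<phi>"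
  shows "t \<otimes> inv y \<in> centr G Q"
proof -
  have t': "t \<in> carrier G" and y': "y \<in> carrier G" using t y by (auto simp: twisted_fixed_def)
  have "t \<otimes> inv y \<otimes> u = u \<otimes> (t \<otimes> inv y)" if u: "u \<in> Q" for u
  proof -
    have "inv t \<otimes> u \<otimes> t = inv y \<otimes> u \<otimes> y"
      using twisted_fixed_conj[OF t u] twisted_fixed_conj[OF y u] by simp
    then have "t \<otimes> (inv t \<otimes> u \<otimes> t) \<otimes> inv y = t \<otimes> (inv y \<otimes> u \<otimes> y) \<otimes> inv y" by simp
    then show ?thesis using t' y' u Q_closed by (simp add: m_assoc)
  qed
  then show ?thesis using t' y' by (auto simp: centr_def)
qed

lemma inv_act_mult_twisted_fixed:
  assumes z: "z \<in> twisted_fixed G Q \<phi>" and w: "w \<in> carrier G" and u: "u \<in> Q"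
  shows "inv (act u w) \<otimes> z = \<phi> u \<otimes> (inv w \<otimes> z) \<otimes> inv (\<phi> u)"
proof -
  have z': "z \<in> carrier G" using z by (auto simp: twisted_fixed_def)
  have "inv u \<otimes> z = z \<otimes> inv (\<phi> u)"
    using twisted_fixed_conj[OF z u] z' u Q_closed by (simp add: inv_mult_group m_assoc)
  then show ?thesis
    using z' w u Q_closed \<phi>_closed by (simp add: act_def inv_mult_group m_assoc)
qed


lemma conv_eq_conv_brauer_at_twisted_fixed:
  fixes c i :: "'g \<Rightarrow> 'k::field"
  assumes p: "Factorial_Ring.prime p" and char: "CHAR('k) = p" and card: "card Q = p ^ n"
    and c: "\<And>u y. u \<in> Q \<Longrightarrow> y \<in> carrier G \<Longrightarrow> c (act u y) = c y"
    and i: "\<And>u d. u \<in> Q \<Longrightarrow> d \<in> carrier G \<Longrightarrow> i (\<phi> u \<otimes> d \<otimes> inv (\<phi> u)) = i d"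
    and z: "z \<in> twisted_fixed G Q \<phi>"
  shows "conv G c i z = conv G c (brauer G (\<phi> ` Q) i) z"
proof -
  let ?h = "\<lambda>w. c w * (if inv w \<otimes> z \<in> centr G (\<phi> ` Q) then 0 else i (inv w \<otimes> z))"
  have z': "z \<in> carrier G" using z twisted_fixed_subset by auto
  have "?h (act u w) = ?h w" if u: "u \<in> Q" and w: "w \<in> carrier G" for u w
  proof -
    have wz: "inv w \<otimes> z \<in> carrier G" using w z' by simp
    have "\<phi> u \<otimes> (inv w \<otimes> z) \<otimes> inv (\<phi> u) \<in> centr G (\<phi> ` Q) \<longleftrightarrow> inv w \<otimes> z \<in> centr G (\<phi> ` Q)"
      using conj_mem_centr_iff[OF subgroup_image _ wz] u by blast
    then show ?thesis
      using inv_act_mult_twisted_fixed[OF z w u] c[OF u w] i[OF u wz] by simp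
  qed
  then have "(\<Sum>w\<in>carrier G. ?h w) = (\<Sum>w\<in>twisted_fixed G Q \<phi>. ?h w)"
    by (rule sum_eq_sum_twisted_fixed[OF p char card])
  also have "\<dots> = 0" using inv_mult_twisted_fixed[OF _ z] by (intro sum.neutral) simp
  finally have "(\<Sum>w\<in>carrier G. ?h w) = 0" .
  moreover have "c w * i (inv w \<otimes> z) = c w * brauer G (\<phi> ` Q) i (inv w \<otimes> z) + ?h w" for w
    by (simp add: brauer_def)
  ultimately show ?thesis using z' by (simp add: conv_eval sum.distrib)
qed

text \<open>A twisted form of the multiplicativity of the Brauer homomorphism on fixed points.\<close>

lemma gproj_conv_eq_conv_brauer:
  fixes c i :: "'g \<Rightarrow> 'k::field"
  assumes p: "Factorial_Ring.prime p" and char: "CHAR('k) = p" and card: "card Q = p ^ n"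
    and c: "\<And>u y. u \<in> Q \<Longrightarrow> y \<in> carrier G \<Longrightarrow> c (act u y) = c y"
    and i: "\<And>u d. u \<in> Q \<Longrightarrow> d \<in> carrier G \<Longrightarrow> i (\<phi> u \<otimes> d \<otimes> inv (\<phi> u)) = i d"
  shows "gproj (twisted_fixed G Q \<phi>) (conv G c i) =
    conv G (gproj (twisted_fixed G Q \<phi>) c) (brauer G (\<phi> ` Q) i)"
proof -
  have "gproj (twisted_fixed G Q \<phi>) (conv G c i) =
      gproj (twisted_fixed G Q \<phi>) (conv G c (brauer G (\<phi> ` Q) i))"
    by (rule ext) (simp add: gproj_def conv_eq_conv_brauer_at_twisted_fixed[where c = c and i = i, OF p char card c i])
  also have "\<dots> = conv G (gproj (twisted_fixed G Q \<phi>) c) (brauer G (\<phi> ` Q) i)"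
    using \<phi>_closed by (intro gproj_conv_right[OF subgroup_centr brauer_in_galg]
        mult_centr_twisted_fixed_iff) auto
  finally show ?thesis .
qed

lemma bimod_hom_delta_one_invariant:
  assumes R: "subgroup R G" and \<phi>R: "\<And>u. u \<in> Q \<Longrightarrow> \<phi> u \<in> R"
    and f: "bimod_hom G Q R \<phi> (galg G R) id N f"
    and u: "u \<in> Q" and y: "y \<in> carrier G"
  shows "f (delta \<one>) (act u y) = f (delta \<one>) y"
proof -
  have one: "delta \<one> \<in> galg G R" by (rule delta_in_galg[OF subgroup.one_closed[OF R]])
  have fL: "f (conv G (delta (\<phi> u)) (delta \<one>)) = conv G (delta u) (f (delta \<one>))"
    and fR: "f (conv G (delta \<one>) (delta (\<phi> u))) = conv G (f (delta \<one>)) (delta (\<phi> u))"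
    using f u \<phi>R[OF u] one unfolding bimod_hom_def id_def by blast+
  have "conv G (delta u) (f (delta \<one>)) = f (conv G (delta (\<phi> u)) (delta \<one>))" by (rule fL[symmetric])
  also have "\<dots> = f (conv G (delta \<one>) (delta (\<phi> u)))" using \<phi>_closed[OF u] by (simp add: delta_mult)
  also have "\<dots> = conv G (f (delta \<one>)) (delta (\<phi> u))" by (rule fR)
  finally have "conv G (delta u) (f (delta \<one>)) (u \<otimes> y) = conv G (f (delta \<one>)) (delta (\<phi> u)) (u \<otimes> y)"
    by simp
  then show ?thesis using Q_closed[OF u] \<phi>_closed[OF u] y
    by (simp add: conv_delta_left conv_delta_right act_def)
qed

lemma bimod_hom_peirce_delta_invariant:
  fixes e i :: "'g \<Rightarrow> 'k::field"
  assumes R: "subgroup R G" and \<phi>R: "\<And>u. u \<in> Q \<Longrightarrow> \<phi> u \<in> R"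
    and g: "bimod_hom G Q R id (peirce_space G e i) \<phi> (galg G R) g"
    and e: "\<And>u. u \<in> Q \<Longrightarrow> conv G (delta u) e = conv G e (delta u)"
    and i: "\<And>u. u \<in> Q \<Longrightarrow> conv G (delta (inv (\<phi> u))) i = conv G i (delta (inv (\<phi> u)))"
    and u: "u \<in> Q" and y: "y \<in> carrier G"
  shows "g (conv G (conv G e (delta (act u y))) i) \<one> = g (conv G (conv G e (delta y)) i) \<one>"
proof -
  let ?n = "\<lambda>y. conv G (conv G e (delta y)) i"
  have u': "u \<in> carrier G" and v: "inv (\<phi> u) \<in> carrier G" "inv (\<phi> u) \<in> R"
    using Q_closed[OF u] \<phi>_closed[OF u] subgroup.m_inv_closed[OF R \<phi>R[OF u]] by auto
  have left: "conv G (delta u) (?n y) = ?n (u \<otimes> y)"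
    using u' y by (simp add: conv_assoc[symmetric] e[OF u]) (simp add: conv_assoc delta_mult)
  have "?n (act u y) = conv G (?n (u \<otimes> y)) (delta (inv (\<phi> u)))"
    using u' y v by (simp add: act_def conv_assoc i[OF u] delta_mult[symmetric])
  moreover have "?n (u \<otimes> y) \<in> peirce_space G e i" by (rule peirce_space_delta) (simp add: u' y)
  ultimately have "g (?n (act u y)) = conv G (g (conv G (delta u) (?n y))) (delta (inv (\<phi> u)))"
    using g v(2) left unfolding bimod_hom_def by simp
  also have "g (conv G (delta u) (?n y)) = conv G (delta (\<phi> u)) (g (?n y))"
    using g u peirce_space_delta[OF y, of e i] unfolding bimod_hom_def id_def by blast
  finally show ?thesis using \<phi>_closed[OF u] by (simp add: conv_delta_left conv_delta_right)
qed

lemma bimod_summand_twisted_fixed_coeff: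
  fixes e i :: "'g \<Rightarrow> 'k::field"
  assumes p: "Factorial_Ring.prime p" and char: "CHAR('k) = p" and card: "card Q = p ^ n"
    and R: "subgroup R G" and \<phi>R: "\<And>u. u \<in> Q \<Longrightarrow> \<phi> u \<in> R"
    and e: "conv G e e = e" "\<And>u. u \<in> Q \<Longrightarrow> conv G (delta u) e = conv G e (delta u)"
    and i: "conv G i i = i"
      "\<And>u. u \<in> Q \<Longrightarrow> conv G (delta (inv (\<phi> u))) i = conv G i (delta (inv (\<phi> u)))"
    and summand: "bimod_summand G Q R \<phi> (galg G R) id (peirce_space G e i)"
  obtains c y0 where "c \<in> peirce_space G e i"
    and "\<And>u y. u \<in> Q \<Longrightarrow> y \<in> carrier G \<Longrightarrow> c (act u y) = c y"
    and "y0 \<in> twisted_fixed G Q \<phi>" and "c y0 \<noteq> 0"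
proof -
  let ?N = "peirce_space G e i" and ?n = "\<lambda>y. conv G (conv G e (delta y)) i"
  obtain f g where f: "bimod_hom G Q R \<phi> (galg G R) id ?N f"
    and g: "bimod_hom G Q R id ?N \<phi> (galg G R) g" and gf: "\<forall>m \<in> galg G R. g (f m) = m"
    using summand unfolding bimod_summand_def by blast
  define c where "c = f (delta \<one>)"
  have one: "(delta \<one> :: 'g \<Rightarrow> 'k) \<in> galg G R" by (rule delta_in_galg[OF subgroup.one_closed[OF R]])
  have c: "c \<in> ?N" using f one unfolding bimod_hom_def c_def by blast
  have c_inv: "\<And>u y. u \<in> Q \<Longrightarrow> y \<in> carrier G \<Longrightarrow> c (act u y) = c y"
    unfolding c_def by (rule bimod_hom_delta_one_invariant[OF R \<phi>R f])
  have "g c = gsum (carrier G) (\<lambda>y. gsmult (c y) (g (?n y)))"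
    using gsum_smult_closed_linear[OF finite_carrier, where n = ?n,
        OF peirce_space_delta c peirce_space_gadd peirce_space_gsmult, where g = g and t = c]
      g peirce_space_eq_gsum[OF c e(1) i(1)]
    unfolding bimod_hom_def by simp
  then have "g c \<one> = (\<Sum>y\<in>carrier G. c y * g (?n y) \<one>)" by (simp add: gsum_def gsmult_def)
  moreover have "g c \<one> = 1" using gf one by (simp add: c_def delta_def)
  ultimately have "1 = (\<Sum>y\<in>carrier G. c y * g (?n y) \<one>)" by simp
  also have "\<dots> = (\<Sum>y\<in>twisted_fixed G Q \<phi>. c y * g (?n y) \<one>)"
    using c_inv bimod_hom_peirce_delta_invariant[OF R \<phi>R g e(2) i(2)]
    by (intro sum_eq_sum_twisted_fixed[OF p char card]) simp
  finally have "\<exists>y0\<in>twisted_fixed G Q \<phi>. c y0 \<noteq> 0"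
    by (metis (no_types, lifting) mult_zero_left sum.neutral zero_neq_one)
  then show ?thesis using that c c_inv by blast
qed


lemma brauer_conv_gconj_nonzero:
  fixes c e i :: "'g \<Rightarrow> 'k::field"
  assumes p: "Factorial_Ring.prime p" and char: "CHAR('k) = p" and card: "card Q = p ^ n"
    and e: "e \<in> gcenter G (centr G Q)"
    and c: "conv G e c = c" "conv G c i = c" "\<And>u y. u \<in> Q \<Longrightarrow> y \<in> carrier G \<Longrightarrow> c (act u y) = c y"
    and i: "\<And>u d. u \<in> Q \<Longrightarrow> d \<in> carrier G \<Longrightarrow> i (\<phi> u \<otimes> d \<otimes> inv (\<phi> u)) = i d"
    and y0: "y0 \<in> twisted_fixed G Q \<phi>" "c y0 \<noteq> 0"
  shows "conv G (brauer G (\<phi> ` Q) i) (gconj G (inv y0) e) \<noteq> gzero"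
proof
  let ?T = "twisted_fixed G Q \<phi>" and ?e' = "gconj G (inv y0) e"
  define cT where "cT = gproj ?T c"
  have x: "inv y0 \<in> carrier G" using y0 twisted_fixed_subset by auto
  have eC: "e \<in> galg G (centr G Q)" using e by (simp add: gcenter_def)
  have e_cT: "conv G e cT = cT"
    using gproj_conv_left[OF subgroup_centr[OF subgroup.subset[OF subgroup_Q]] eC
        centr_mult_twisted_fixed_iff, of c] c(1) by (simp add: cT_def)
  have cT_brauer: "conv G cT (brauer G (\<phi> ` Q) i) = cT"
    using gproj_conv_eq_conv_brauer[where c = c and i = i, OF p char card c(3) i] c(2) by (simp add: cT_def)
  have cT: "cT \<in> galg G ?T" by (simp add: cT_def gproj_def galg_def)
  then have "conv G cT (delta (inv y0)) \<in> galg G (centr G Q)"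
    by (rule conv_delta_in_galg[OF x twisted_fixed_subset _ mult_inv_twisted_fixed[OF _ y0(1)]])
  then have "conv G cT ?e' = conv G (conv G e (conv G cT (delta (inv y0)))) (delta (inv (inv y0)))"
    using gcenter_commute[OF e] by (simp add: gconj_def conv_assoc)
  also have "\<dots> = cT"
    using x e_cT conv_delta_one[OF galg_mono[OF twisted_fixed_subset cT]] by (simp add: conv_assoc delta_mult)
  finally have "cT = conv G cT (conv G (brauer G (\<phi> ` Q) i) ?e')"
    using cT_brauer by (metis conv_assoc)
  moreover assume "conv G (brauer G (\<phi> ` Q) i) ?e' = gzero"
  ultimately have "cT = gzero" by (simp add: conv_gzero_right)
  then have "cT y0 = 0" by (simp add: gzero_def)
  then show False using y0 by (simp add: cT_def gproj_def)
qed


lemma gconj_eQ_if_bimod_summand: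
  fixes i :: "'g \<Rightarrow> 'k::field"
  assumes p: "Factorial_Ring.prime p" and char: "CHAR('k) = p" and card: "card Q = p ^ n"
    and i: "almost_source G b P i" and P: "subgroup P G" "Q \<subseteq> P"
    and R: "subgroup R G" "R \<subseteq> P" and \<phi>R: "\<And>u. u \<in> Q \<Longrightarrow> \<phi> u \<in> R"
    and summand: "bimod_summand G Q R \<phi> (galg G R) id (peirce_space G (eQ G i Q) i)"
  shows "\<exists>x\<in>carrier G. (\<forall>u\<in>Q. \<phi> u = x \<otimes> u \<otimes> inv x) \<and>
    gconj G x (eQ G i Q) = eQ G i (conjset G x Q)"
proof -
  let ?e = "eQ G i Q"
  have i_fixed: "i \<in> fixed_pts G P" and ii: "conv G i i = i"
    using almost_source_fixed_pts[OF i] almost_source_idem[OF i] .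
  have EQ: "is_block G (centr G Q) ?e" by (rule is_block_eQ[OF i subgroup_Q P(2)])
  then have e: "?e \<in> gcenter G (centr G Q)" "conv G ?e ?e = ?e" unfolding is_block_def by blast+
  have \<phi>P: "inv (\<phi> u) \<in> P" if u: "u \<in> Q" for u
  proof -
    have "\<phi> u \<in> P" using \<phi>R[OF u] R(2) by blast
    then show ?thesis by (rule subgroup.m_inv_closed[OF P(1)])
  qed
  obtain c y0 where c: "c \<in> peirce_space G ?e i" "\<And>u y. u \<in> Q \<Longrightarrow> y \<in> carrier G \<Longrightarrow> c (act u y) = c y"
    and y0: "y0 \<in> twisted_fixed G Q \<phi>" "c y0 \<noteq> 0"
    by (rule bimod_summand_twisted_fixed_coeff[OF p char card R(1) \<phi>R e(2)
        delta_commute_eQ[OF i P(1) subgroup_Q P(2)] ii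
        fixed_pts_delta_commute[OF i_fixed \<phi>P subgroup.subset[OF P(1)]] summand]) (assumption | rule that)+
  have y0': "y0 \<in> carrier G" using y0(1) twisted_fixed_subset by blast
  define x where "x = inv y0"
  have x: "x \<in> carrier G" using y0' by (simp add: x_def)
  have \<phi>x: "\<forall>u\<in>Q. \<phi> u = x \<otimes> u \<otimes> inv x" using y0' by (simp add: x_def twisted_fixed_conj[OF y0(1)])
  then have img: "\<phi> ` Q = conjset G x Q" by (auto simp: conjset_def)
  have i_conj: "i (\<phi> u \<otimes> d \<otimes> inv (\<phi> u)) = i d" if "u \<in> Q" "d \<in> carrier G" for u d
    using fixed_pts_conj[OF i_fixed P(1) _ that(2)] \<phi>R[OF that(1)] R(2) by blast
  have "conv G (brauer G (\<phi> ` Q) i) (gconj G x ?e) \<noteq> gzero"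
    unfolding x_def by (rule brauer_conv_gconj_nonzero[where c = c and i = i, OF p char card e(1)
        peirce_space_conv_left[OF c(1) e(2)] peirce_space_conv_right[OF c(1) ii] c(2) i_conj y0])
  moreover have "is_block G (centr G (\<phi> ` Q)) (gconj G x ?e)"
    using is_block_gconj[OF x centr_subset EQ] centr_conjset[OF x subgroup.subset[OF subgroup_Q]] img
    by simp
  moreover have "\<phi> ` Q \<subseteq> P" using \<phi>R R(2) by blast
  ultimately have "eQ G i (\<phi> ` Q) = gconj G x ?e"
    using eQ_eq_if_conv_brauer_nonzero[OF i subgroup_image] by blast
  then show ?thesis using x \<phi>x img by (intro bexI[where x = x] conjI) simp_all
qed

end

theorem proposition2p6:
  fixes G :: "('g,'b) monoid_scheme" and p :: nat
    and b i e :: "'g \<Rightarrow> 'k::field" and P Q R :: "'g set" and \<phi> :: "'g \<Rightarrow> 'g"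
  assumes "group G" and "finite (carrier G)"
    and "Factorial_Ring.prime p" and "CHAR('k) = p"
    and "splitting_field_for G (carrier G) TYPE('k)"
    and "\<forall>Q'. subgroup Q' G \<and> Q' \<subseteq> P \<longrightarrow> splitting_field_for G (centr G Q') TYPE('k)"
    and "is_block G (carrier G) b"
    and "defect_group G p b P"
    and "almost_source G b P i"
    and "subgroup Q G" and "Q \<subseteq> P" and "subgroup R G" and "R \<subseteq> P"
    and "is_block G (centr G Q) e" and "conv G (brauer G Q i) e \<noteq> gzero"
    and "\<forall>u \<in> Q. \<phi> u \<in> R"
    and "\<forall>u \<in> Q. \<forall>v \<in> Q. \<phi> (u \<otimes>\<^bsub>G\<^esub> v) = \<phi> u \<otimes>\<^bsub>G\<^esub> \<phi> v"
    and "inj_on \<phi> Q"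
    and "bimod_summand G Q R \<phi> (galg G R) id
           {conv G (conv G e a) i | a. a \<in> galg G (carrier G)}"
  shows "fusion_hom G i Q R \<phi>"
proof -
  have fg: "finite_group G" using assms(1,2) by (simp add: finite_group_def finite_group_axioms_def)
  have \<phi>R: "\<And>u. u \<in> Q \<Longrightarrow> \<phi> u \<in> R" using assms(16) by blast
  interpret twisted_action G Q \<phi>
  proof (rule twisted_action.intro[OF fg twisted_action_axioms.intro])
    show "subgroup Q G" by (rule assms(10))
    show "\<phi> u \<in> carrier G" if "u \<in> Q" for u using \<phi>R[OF that] subgroup.subset[OF assms(12)] by blast
    show "\<phi> (u \<otimes>\<^bsub>G\<^esub> v) = \<phi> u \<otimes>\<^bsub>G\<^esub> \<phi> v" if "u \<in> Q" "v \<in> Q" for u v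
      using assms(17) that by blast
  qed
  have P: "p_subgroup G p P" using assms(8) by (simp add: defect_group_def)
  obtain n where card: "card Q = p ^ n"
    using card_subgroup_of_p_subgroup[OF assms(3) P assms(10,11)] by blast
  have "eQ G i Q = e" by (rule eQ_eq_if_conv_brauer_nonzero[OF assms(9,10,11,14,15)])
  then have "bimod_summand G Q R \<phi> (galg G R) id (peirce_space G (eQ G i Q) i)"
    using assms(19) by (simp add: peirce_space_def)
  with P obtain x where "x \<in> carrier G" "\<forall>u\<in>Q. \<phi> u = x \<otimes>\<^bsub>G\<^esub> u \<otimes>\<^bsub>G\<^esub> inv\<^bsub>G\<^esub> x"
    and "gconj G x (eQ G i Q) = eQ G i (conjset G x Q)"
    using gconj_eQ_if_bimod_summand[OF assms(3,4) card assms(9) _ assms(11,12,13) \<phi>R]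
    by (auto simp: p_subgroup_def)
  then show ?thesis using assms(16,17) unfolding fusion_hom_def conjset_def by blast
qed

end
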